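(* (1) $\to_{wv}$ is quasi-strongly confluent: ${}_{wv}\!\!\leftarrow\cdot\to_{wv}\ \subseteq\ (\to_{wv}\cdot\,{}_{wv}\!\!\leftarrow)\,\cup=$. (2) $\to_{wd}$ and $\to_d$ are each quasi-strongly confluent: ${}_{wd}\!\!\leftarrow\cdot\to_{wd}\subseteq(\to_{wd}\cdot\,{}_{wd}\!\!\leftarrow)\cup=$ and ${}_{d}\!\leftarrow\cdot\to_{d}\subseteq(\to_{d}\cdot\,{}_{d}\!\leftarrow)\cup=$. (3) ${}_{wd}\!\!\leftarrow\cdot\to_{wv}\ \subseteq\ \to_{wv}\cdot\,{}_{wd}\!\!\leftarrow$; moreover ${}_{d}\!\leftarrow\cdot\to_{v}\ \subseteq\ \to_{v}\cdot\,{}^*_{d}\!\leftarrow$; and ${}^*_{d}\!\leftarrow\cdot\to_v^*\ \subseteq\ \to_v^*\cdot\,{}^*_{d}\!\leftarrow$. (4) $\to_v$ is confluent: ${}^*_{v}\!\leftarrow\cdot\to_v^*\ \subseteq\ \to_v^*\cdot\,{}^*_{v}\!\leftarrow$.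
   Context: Bang calculus. Fix a countably infinite set of variables. The set $!\Lambda$ of terms is $T,S,R ::= x \mid \lambda x.T \mid T\,S \mid \mathrm{der}\,T \mid\ !T$; $\lambda$ is the only binder, terms are taken up to $\alpha$-conversion, $T\{S/x\}$ is capture-avoiding substitution. Contexts: $C ::= [\cdot] \mid \lambda x.C \mid C\,T \mid T\,C \mid \mathrm{der}\,C \mid\ !C$; ground contexts: $W ::= [\cdot] \mid \lambda x.W \mid W\,T \mid T\,W \mid \mathrm{der}\,W$. Root steps: $(\lambda x.T)(!S)\mapsto_v T\{S/x\}$, $\mathrm{der}(!T)\mapsto_d T$. For $r\in\{v,d\}$, $T\to_r S$ iff $T=C[T']$, $S=C[S']$ for some context $C$ with $T'\mapsto_r S'$; $\to_{wr}$ is the same with ground contexts only. Notation: $\cdot$ is relational composition (first the left relation, then the right), ${}_r\!\leftarrow$ is the converse of $\to_r$, ${}^*$ denotes reflexive-transitive closure, and $=$ is the identity relation. *)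

theory Defs
  imports Main
begin

(* Terms of the bang calculus, modulo alpha-conversion, represented with
   de Bruijn indices (Var i refers to the i-th enclosing lambda, or to a
   free variable if i exceeds the binder depth). *)
datatype trm = Var nat | Lam trm | App trm trm | Der trm | Bang trm

fun lift :: "nat \<Rightarrow> trm \<Rightarrow> trm" where
  "lift k (Var i) = (if i < k then Var i else Var (Suc i))"
| "lift k (Lam t) = Lam (lift (Suc k) t)"
| "lift k (App t u) = App (lift k t) (lift k u)"
| "lift k (Der t) = Der (lift k t)"
| "lift k (Bang t) = Bang (lift k t)"

fun subst :: "trm \<Rightarrow> nat \<Rightarrow> trm \<Rightarrow> trm" where
  "subst (Var i) k s = (if k < i then Var (i - 1) else if i = k then s else Var i)"
| "subst (Lam t) k s = Lam (subst t (Suc k) (lift 0 s))"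
| "subst (App t u) k s = App (subst t k s) (subst u k s)"
| "subst (Der t) k s = Der (subst t k s)"
| "subst (Bang t) k s = Bang (subst t k s)"

definition root_v :: "(trm \<times> trm) set" where
  "root_v = {(App (Lam t) (Bang s), subst t 0 s) | t s. True}"

definition root_d :: "(trm \<times> trm) set" where
  "root_d = {(Der (Bang t), t) | t. True}"

datatype ctxt = Hole | CLam ctxt | CAppL ctxt trm | CAppR trm ctxt
  | CDer ctxt | CBang ctxt

fun plug :: "ctxt \<Rightarrow> trm \<Rightarrow> trm" where
  "plug Hole t = t"
| "plug (CLam C) t = Lam (plug C t)"
| "plug (CAppL C u) t = App (plug C t) u"
| "plug (CAppR u C) t = App u (plug C t)"
| "plug (CDer C) t = Der (plug C t)"
| "plug (CBang C) t = Bang (plug C t)"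

fun ground :: "ctxt \<Rightarrow> bool" where
  "ground Hole = True"
| "ground (CLam C) = ground C"
| "ground (CAppL C u) = ground C"
| "ground (CAppR u C) = ground C"
| "ground (CDer C) = ground C"
| "ground (CBang C) = False"

definition ctx_closure :: "(trm \<times> trm) set \<Rightarrow> (trm \<times> trm) set" where
  "ctx_closure r = {(plug C t, plug C s) | C t s. (t, s) \<in> r}"

definition wctx_closure :: "(trm \<times> trm) set \<Rightarrow> (trm \<times> trm) set" where
  "wctx_closure r = {(plug C t, plug C s) | C t s. ground C \<and> (t, s) \<in> r}"

definition step_v :: "(trm \<times> trm) set" where "step_v = ctx_closure root_v"
definition step_d :: "(trm \<times> trm) set" where "step_d = ctx_closure root_d"
definition step_wv :: "(trm \<times> trm) set" where "step_wv = wctx_closure root_v"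
definition step_wd :: "(trm \<times> trm) set" where "step_wd = wctx_closure root_d"

end

theory Submission imports Defs begin

(* All four statements are local: after inverting the two steps out of a common term,
   the only genuine overlaps are a v-redex App (Lam t) (Bang s) with a step inside t or s,
   and a d-redex Der (Bang t) with a step inside t.  A step inside t is preserved by
   substitution, so it closes in one step; a step inside s is copied once per occurrence
   of the bound variable, which is why the d-residuals of a v-step form a d-sequence.
   Under a ground context nothing reduces below a Bang, so the weak overlaps are even
   simpler.  Commutation of d* with v* then follows from the strip lemma, and confluence
   of v from the triangle property of parallel reduction against complete development. *)

lemma lift_lift:
  "i \<le> k \<Longrightarrow> lift (Suc k) (lift i t) = lift i (lift k t)"
  by (induct t arbitrary: i k) auto

lemma lift_subst [simp]:
  "j \<le> i \<Longrightarrow> lift i (subst t j s) = subst (lift (Suc i) t) j (lift i s)"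
  by (induct t arbitrary: i j s) (auto simp: lift_lift)

lemma lift_subst_le:
  "i \<le> j \<Longrightarrow> lift i (subst t j s) = subst (lift i t) (Suc j) (lift i s)"
  by (induct t arbitrary: i j s) (auto simp: lift_lift)

lemma subst_lift [simp]: "subst (lift k t) k s = t"
  by (induct t arbitrary: k s) auto

lemma subst_subst:
  "i \<le> j \<Longrightarrow> subst (subst t (Suc j) (lift i v)) i (subst u j v) = subst (subst t i u) j v"
  by (induct t arbitrary: i j u v) (auto simp: lift_lift [symmetric] lift_subst_le)

lemma subst_subst_0:
  "subst (subst t (Suc k) (lift 0 v)) 0 (subst u k v) = subst (subst t 0 u) k v"
  using subst_subst [of 0 k] by simp

inductive_set cclosure :: "(trm \<times> trm) set \<Rightarrow> (trm \<times> trm) set" for r where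
  root: "(a, b) \<in> r \<Longrightarrow> (a, b) \<in> cclosure r"
| lam: "(a, b) \<in> cclosure r \<Longrightarrow> (Lam a, Lam b) \<in> cclosure r"
| appL: "(a, b) \<in> cclosure r \<Longrightarrow> (App a u, App b u) \<in> cclosure r"
| appR: "(a, b) \<in> cclosure r \<Longrightarrow> (App u a, App u b) \<in> cclosure r"
| der: "(a, b) \<in> cclosure r \<Longrightarrow> (Der a, Der b) \<in> cclosure r"
| bang: "(a, b) \<in> cclosure r \<Longrightarrow> (Bang a, Bang b) \<in> cclosure r"

inductive_set wclosure :: "(trm \<times> trm) set \<Rightarrow> (trm \<times> trm) set" for r where
  root: "(a, b) \<in> r \<Longrightarrow> (a, b) \<in> wclosure r"
| lam: "(a, b) \<in> wclosure r \<Longrightarrow> (Lam a, Lam b) \<in> wclosure r"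
| appL: "(a, b) \<in> wclosure r \<Longrightarrow> (App a u, App b u) \<in> wclosure r"
| appR: "(a, b) \<in> wclosure r \<Longrightarrow> (App u a, App u b) \<in> wclosure r"
| der: "(a, b) \<in> wclosure r \<Longrightarrow> (Der a, Der b) \<in> wclosure r"

lemma ctx_closure_eq_cclosure: "ctx_closure r = cclosure r"
proof (intro equalityI subrelI)
  fix a b assume "(a, b) \<in> ctx_closure r"
  then obtain C t s where "a = plug C t" "b = plug C s" "(t, s) \<in> r"
    unfolding ctx_closure_def by blast
  then show "(a, b) \<in> cclosure r"
    by (induct C arbitrary: a b) (auto intro: cclosure.intros)
next
  fix a b assume "(a, b) \<in> cclosure r"
  then have "\<exists>C t s. a = plug C t \<and> b = plug C s \<and> (t, s) \<in> r"
    by induct (metis plug.simps)+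
  then show "(a, b) \<in> ctx_closure r"
    unfolding ctx_closure_def by blast
qed

lemma wctx_closure_eq_wclosure: "wctx_closure r = wclosure r"
proof (intro equalityI subrelI)
  fix a b assume "(a, b) \<in> wctx_closure r"
  then obtain C t s where "a = plug C t" "b = plug C s" "ground C" "(t, s) \<in> r"
    unfolding wctx_closure_def by blast
  then show "(a, b) \<in> wclosure r"
    by (induct C arbitrary: a b) (auto intro: wclosure.intros)
next
  fix a b assume "(a, b) \<in> wclosure r"
  then have "\<exists>C t s. a = plug C t \<and> b = plug C s \<and> ground C \<and> (t, s) \<in> r"
    by induct (metis plug.simps ground.simps)+
  then show "(a, b) \<in> wctx_closure r"
    unfolding wctx_closure_def by blast
qed

lemma root_v_iff [simp]:
  "(a, b) \<in> root_v \<longleftrightarrow> (\<exists>t s. a = App (Lam t) (Bang s) \<and> b = subst t 0 s)"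
  unfolding root_v_def by auto

lemma root_d_iff [simp]: "(a, b) \<in> root_d \<longleftrightarrow> a = Der (Bang b)"
  unfolding root_d_def by auto

definition substitutive :: "(trm \<times> trm) set \<Rightarrow> bool" where
  "substitutive r \<longleftrightarrow>
    (\<forall>a b k s. (a, b) \<in> r \<longrightarrow> (lift k a, lift k b) \<in> r \<and> (subst a k s, subst b k s) \<in> r)"

lemma substitutive_root_v: "substitutive root_v"
  unfolding substitutive_def by (auto simp: subst_subst_0 [symmetric])

lemma substitutive_root_d: "substitutive root_d"
  unfolding substitutive_def by auto

lemma cclosure_lift:
  "(a, b) \<in> cclosure r \<Longrightarrow> substitutive r \<Longrightarrow> (lift k a, lift k b) \<in> cclosure r"
  by (induct arbitrary: k rule: cclosure.induct) (auto intro: cclosure.intros simp: substitutive_def)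

lemma cclosure_subst:
  "(a, b) \<in> cclosure r \<Longrightarrow> substitutive r \<Longrightarrow> (subst a k s, subst b k s) \<in> cclosure r"
  by (induct arbitrary: k s rule: cclosure.induct) (auto intro: cclosure.intros simp: substitutive_def)

lemma wclosure_subst:
  "(a, b) \<in> wclosure r \<Longrightarrow> substitutive r \<Longrightarrow> (subst a k s, subst b k s) \<in> wclosure r"
  by (induct arbitrary: k s rule: wclosure.induct) (auto intro: wclosure.intros simp: substitutive_def)

lemma rtrancl_map:
  assumes "\<And>a b. (a, b) \<in> r \<Longrightarrow> (f a, f b) \<in> r" and "(a, b) \<in> r\<^sup>*"
  shows "(f a, f b) \<in> r\<^sup>*"
  using assms(2) by induct (auto intro: rtrancl_into_rtrancl assms(1))

lemma cclosure_rtrancl_App: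
  "(a, b) \<in> (cclosure r)\<^sup>* \<Longrightarrow> (c, d) \<in> (cclosure r)\<^sup>* \<Longrightarrow>
    (App a c, App b d) \<in> (cclosure r)\<^sup>*"
  by (meson rtrancl_map cclosure.appL cclosure.appR rtrancl_trans)

lemmas cclosure_rtrancl_Lam = rtrancl_map [of "cclosure r" Lam for r, OF cclosure.lam]
lemmas cclosure_rtrancl_Der = rtrancl_map [of "cclosure r" Der for r, OF cclosure.der]
lemmas cclosure_rtrancl_Bang = rtrancl_map [of "cclosure r" Bang for r, OF cclosure.bang]

lemma subst_cclosure_arg:
  "(s, s') \<in> cclosure r \<Longrightarrow> substitutive r \<Longrightarrow>
    (subst t k s, subst t k s') \<in> (cclosure r)\<^sup>*"
proof (induct t arbitrary: k s s')
  case (Lam t)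
  then show ?case by (simp add: cclosure_rtrancl_Lam cclosure_lift)
qed (auto intro: cclosure_rtrancl_App cclosure_rtrancl_Der cclosure_rtrancl_Bang)

lemma cclosure_LamE:
  assumes "(Lam a, z) \<in> cclosure r"
  obtains (root) "(Lam a, z) \<in> r" | (inner) a' where "z = Lam a'" "(a, a') \<in> cclosure r"
  using assms by (cases rule: cclosure.cases) auto

lemma cclosure_AppE:
  assumes "(App a c, z) \<in> cclosure r"
  obtains (root) "(App a c, z) \<in> r"
    | (left) a' where "z = App a' c" "(a, a') \<in> cclosure r"
    | (right) c' where "z = App a c'" "(c, c') \<in> cclosure r"
  using assms by (cases rule: cclosure.cases) auto

lemma cclosure_DerE:
  assumes "(Der a, z) \<in> cclosure r"
  obtains (root) "(Der a, z) \<in> r" | (inner) a' where "z = Der a'" "(a, a') \<in> cclosure r"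
  using assms by (cases rule: cclosure.cases) auto

lemma cclosure_BangE:
  assumes "(Bang a, z) \<in> cclosure r"
  obtains (root) "(Bang a, z) \<in> r" | (inner) a' where "z = Bang a'" "(a, a') \<in> cclosure r"
  using assms by (cases rule: cclosure.cases) auto

lemma wclosure_LamE:
  assumes "(Lam a, z) \<in> wclosure r"
  obtains (root) "(Lam a, z) \<in> r" | (inner) a' where "z = Lam a'" "(a, a') \<in> wclosure r"
  using assms by (cases rule: wclosure.cases) auto

lemma wclosure_AppE:
  assumes "(App a c, z) \<in> wclosure r"
  obtains (root) "(App a c, z) \<in> r"
    | (left) a' where "z = App a' c" "(a, a') \<in> wclosure r"
    | (right) c' where "z = App a c'" "(c, c') \<in> wclosure r"
  using assms by (cases rule: wclosure.cases) auto

lemma wclosure_DerE: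
  assumes "(Der a, z) \<in> wclosure r"
  obtains (root) "(Der a, z) \<in> r" | (inner) a' where "z = Der a'" "(a, a') \<in> wclosure r"
  using assms by (cases rule: wclosure.cases) auto

lemma wclosure_Bang: "(Bang a, z) \<in> wclosure r \<Longrightarrow> (Bang a, z) \<in> r"
  by (cases rule: wclosure.cases) auto

lemma Bang_wv_normal: "(Bang a, z) \<notin> wclosure root_v"
  using wclosure_Bang by fastforce

lemma Bang_wd_normal: "(Bang a, z) \<notin> wclosure root_d"
  using wclosure_Bang by fastforce

lemma wv_root_peak:
  assumes "(y, x) \<in> root_v" and "(y, z) \<in> wclosure root_v"
  shows "x = z \<or> (\<exists>w. (x, w) \<in> wclosure root_v \<and> (z, w) \<in> wclosure root_v)"
proof -
  obtain t s where y: "y = App (Lam t) (Bang s)" and x: "x = subst t 0 s"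
    using assms(1) by auto
  from assms(2) [unfolded y] show ?thesis
  proof (cases rule: wclosure_AppE)
    case root
    then show ?thesis using x by auto
  next
    case (left b)
    then obtain t' where "b = Lam t'" "(t, t') \<in> wclosure root_v"
      by (auto elim: wclosure_LamE)
    then have "(x, subst t' 0 s) \<in> wclosure root_v" "(z, subst t' 0 s) \<in> wclosure root_v"
      using left x by (auto intro: wclosure.root wclosure_subst substitutive_root_v)
    then show ?thesis by blast
  next
    case right
    then show ?thesis by (simp add: Bang_wv_normal)
  qed
qed

lemma wv_peak:
  "(y, x) \<in> wclosure root_v \<Longrightarrow> (y, z) \<in> wclosure root_v \<Longrightarrow>
    x = z \<or> (\<exists>w. (x, w) \<in> wclosure root_v \<and> (z, w) \<in> wclosure root_v)"
proof (induct arbitrary: z rule: wclosure.induct)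
  case (root a b)
  then show ?case by (rule wv_root_peak)
next
  case (lam a b)
  from lam(3) show ?case
    by (cases rule: wclosure_LamE) (use lam in \<open>auto intro: wclosure.intros\<close>)
next
  case (appL a b u)
  from appL(3) show ?case
  proof (cases rule: wclosure_AppE)
    case root
    then show ?thesis using wv_root_peak [OF root wclosure.appL [OF appL(1)]] by blast
  qed (use appL in \<open>auto intro: wclosure.intros\<close>)
next
  case (appR a b u)
  from appR(3) show ?case
    by (cases rule: wclosure_AppE) (use appR in \<open>auto intro: wclosure.intros simp: Bang_wv_normal\<close>)
next
  case (der a b)
  from der(3) show ?case
    by (cases rule: wclosure_DerE) (use der in \<open>auto intro: wclosure.intros\<close>)
qed

lemma wd_peak:
  "(y, x) \<in> wclosure root_d \<Longrightarrow> (y, z) \<in> wclosure root_d \<Longrightarrow>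
    x = z \<or> (\<exists>w. (x, w) \<in> wclosure root_d \<and> (z, w) \<in> wclosure root_d)"
proof (induct arbitrary: z rule: wclosure.induct)
  case (root a b)
  then show ?case by (auto elim: wclosure_DerE simp: Bang_wd_normal)
next
  case (lam a b)
  from lam(3) show ?case
    by (cases rule: wclosure_LamE) (use lam in \<open>auto intro: wclosure.intros\<close>)
next
  case (appL a b u)
  from appL(3) show ?case
    by (cases rule: wclosure_AppE) (use appL in \<open>auto intro: wclosure.intros\<close>)
next
  case (appR a b u)
  from appR(3) show ?case
    by (cases rule: wclosure_AppE) (use appR in \<open>auto intro: wclosure.intros\<close>)
next
  case (der a b)
  from der(3) show ?case
    by (cases rule: wclosure_DerE) (use der in \<open>auto intro: wclosure.intros simp: Bang_wd_normal\<close>)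
qed

lemma d_root_peak:
  assumes "(y, x) \<in> root_d" and "(y, z) \<in> cclosure root_d"
  shows "x = z \<or> (\<exists>w. (x, w) \<in> cclosure root_d \<and> (z, w) \<in> cclosure root_d)"
proof -
  have y: "y = Der (Bang x)" using assms(1) by simp
  from assms(2) [unfolded y] show ?thesis
  proof (cases rule: cclosure_DerE)
    case (inner b)
    then obtain x' where "b = Bang x'" "(x, x') \<in> cclosure root_d"
      by (auto elim: cclosure_BangE)
    moreover have "(Der (Bang x'), x') \<in> cclosure root_d"
      by (simp add: cclosure.root)
    ultimately show ?thesis using inner by blast
  qed simp
qed

lemma d_peak:
  "(y, x) \<in> cclosure root_d \<Longrightarrow> (y, z) \<in> cclosure root_d \<Longrightarrow>
    x = z \<or> (\<exists>w. (x, w) \<in> cclosure root_d \<and> (z, w) \<in> cclosure root_d)"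
proof (induct arbitrary: z rule: cclosure.induct)
  case (root a b)
  then show ?case by (rule d_root_peak)
next
  case (lam a b)
  from lam(3) show ?case
    by (cases rule: cclosure_LamE) (use lam in \<open>auto intro: cclosure.intros\<close>)
next
  case (appL a b u)
  from appL(3) show ?case
    by (cases rule: cclosure_AppE) (use appL in \<open>auto intro: cclosure.intros\<close>)
next
  case (appR a b u)
  from appR(3) show ?case
    by (cases rule: cclosure_AppE) (use appR in \<open>auto intro: cclosure.intros\<close>)
next
  case (der a b)
  from der(3) show ?case
  proof (cases rule: cclosure_DerE)
    case root
    then show ?thesis using d_root_peak [OF root cclosure.der [OF der(1)]] by blast
  qed (use der in \<open>auto intro: cclosure.intros\<close>)
next
  case (bang a b)
  from bang(3) show ?case
    by (cases rule: cclosure_BangE) (use bang in \<open>auto intro: cclosure.intros\<close>)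
qed

lemma wd_wv_peak:
  "(y, x) \<in> wclosure root_d \<Longrightarrow> (y, z) \<in> wclosure root_v \<Longrightarrow>
    \<exists>w. (x, w) \<in> wclosure root_v \<and> (z, w) \<in> wclosure root_d"
proof (induct arbitrary: z rule: wclosure.induct)
  case (root a b)
  then show ?case by (auto elim: wclosure_DerE simp: Bang_wv_normal)
next
  case (lam a b)
  from lam(3) show ?case
    by (cases rule: wclosure_LamE) (use lam in \<open>fastforce intro: wclosure.lam\<close>)+
next
  case (appL a b u)
  from appL(3) show ?case
  proof (cases rule: wclosure_AppE)
    case root
    then obtain t s where a: "a = Lam t" and u: "u = Bang s" and z: "z = subst t 0 s"
      by auto
    from appL(1) [unfolded a] obtain t' where "b = Lam t'" "(t, t') \<in> wclosure root_d"
      by (cases rule: wclosure_LamE) auto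
    then have "(App b u, subst t' 0 s) \<in> wclosure root_v"
      and "(z, subst t' 0 s) \<in> wclosure root_d"
      using u z by (auto intro: wclosure.root wclosure_subst substitutive_root_d)
    then show ?thesis by blast
  qed (use appL in \<open>fastforce intro: wclosure.appL wclosure.appR\<close>)+
next
  case (appR a b u)
  from appR(3) show ?case
    by (cases rule: wclosure_AppE)
      (use appR in \<open>fastforce intro: wclosure.appL wclosure.appR simp: Bang_wd_normal\<close>)+
next
  case (der a b)
  from der(3) show ?case
    by (cases rule: wclosure_DerE) (use der in \<open>fastforce intro: wclosure.der\<close>)+
qed

lemma d_v_peak:
  "(y, x) \<in> cclosure root_d \<Longrightarrow> (y, z) \<in> cclosure root_v \<Longrightarrow>
    \<exists>w. (x, w) \<in> cclosure root_v \<and> (z, w) \<in> (cclosure root_d)\<^sup>*"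
proof (induct arbitrary: z rule: cclosure.induct)
  case (root a b)
  then have "(Der (Bang b), z) \<in> cclosure root_v" by simp
  then show ?case
  proof (cases rule: cclosure_DerE)
    case (inner c)
    then obtain b' where "c = Bang b'" "(b, b') \<in> cclosure root_v"
      by (auto elim: cclosure_BangE)
    moreover have "(Der (Bang b'), b') \<in> cclosure root_d"
      by (simp add: cclosure.root)
    ultimately show ?thesis using inner by blast
  qed simp
next
  case (lam a b)
  from lam(3) show ?case
    by (cases rule: cclosure_LamE) (use lam in \<open>fastforce intro: cclosure.lam cclosure_rtrancl_Lam\<close>)+
next
  case (appL a b u)
  from appL(3) show ?case
  proof (cases rule: cclosure_AppE)
    case root
    then obtain t s where a: "a = Lam t" and u: "u = Bang s" and z: "z = subst t 0 s"
      by auto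
    from appL(1) [unfolded a] obtain t' where "b = Lam t'" "(t, t') \<in> cclosure root_d"
      by (cases rule: cclosure_LamE) auto
    then have "(App b u, subst t' 0 s) \<in> cclosure root_v" "(z, subst t' 0 s) \<in> cclosure root_d"
      using u z by (auto intro: cclosure.root cclosure_subst substitutive_root_d)
    then show ?thesis by blast
  qed (use appL in \<open>fastforce intro: cclosure.appL cclosure.appR cclosure_rtrancl_App\<close>)+
next
  case (appR a b u)
  from appR(3) show ?case
  proof (cases rule: cclosure_AppE)
    case root
    then obtain t s where u: "u = Lam t" and a: "a = Bang s" and z: "z = subst t 0 s"
      by auto
    from appR(1) [unfolded a] obtain s' where "b = Bang s'" "(s, s') \<in> cclosure root_d"
      by (cases rule: cclosure_BangE) auto
    then have "(App u b, subst t 0 s') \<in> cclosure root_v"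
      and "(z, subst t 0 s') \<in> (cclosure root_d)\<^sup>*"
      using u z by (auto intro: cclosure.root subst_cclosure_arg substitutive_root_d)
    then show ?thesis by blast
  qed (use appR in \<open>fastforce intro: cclosure.appL cclosure.appR cclosure_rtrancl_App\<close>)+
next
  case (der a b)
  from der(3) show ?case
    by (cases rule: cclosure_DerE)
      (use der in \<open>fastforce intro: cclosure.der cclosure_rtrancl_Der\<close>)+
next
  case (bang a b)
  from bang(3) show ?case
    by (cases rule: cclosure_BangE)
      (use bang in \<open>fastforce intro: cclosure.bang cclosure_rtrancl_Bang\<close>)+
qed

lemma commute_strip:
  assumes "r\<inverse> O s \<subseteq> s O (r\<^sup>*)\<inverse>"
  shows "(r\<^sup>*)\<inverse> O s \<subseteq> s O (r\<^sup>*)\<inverse>"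
proof (intro subrelI)
  fix x z assume "(x, z) \<in> (r\<^sup>*)\<inverse> O s"
  then obtain y where "(y, x) \<in> r\<^sup>*" "(y, z) \<in> s" by blast
  then have "\<exists>w. (x, w) \<in> s \<and> (z, w) \<in> r\<^sup>*"
  proof (induct arbitrary: z rule: rtrancl_induct)
    case (step x1 x2)
    then obtain w where "(x1, w) \<in> s" "(z, w) \<in> r\<^sup>*" by blast
    moreover obtain u where "(x2, u) \<in> s" "(w, u) \<in> r\<^sup>*"
      using assms \<open>(x1, x2) \<in> r\<close> \<open>(x1, w) \<in> s\<close> by blast
    ultimately show ?case by (blast intro: rtrancl_trans)
  qed blast
  then show "(x, z) \<in> s O (r\<^sup>*)\<inverse>" by blast
qed

lemma commute_rtrancl:
  assumes "r\<inverse> O s \<subseteq> s O (r\<^sup>*)\<inverse>"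
  shows "(r\<^sup>*)\<inverse> O s\<^sup>* \<subseteq> s\<^sup>* O (r\<^sup>*)\<inverse>"
proof (intro subrelI)
  fix x z assume "(x, z) \<in> (r\<^sup>*)\<inverse> O s\<^sup>*"
  then obtain y where "(y, z) \<in> s\<^sup>*" "(y, x) \<in> r\<^sup>*" by blast
  then have "\<exists>w. (x, w) \<in> s\<^sup>* \<and> (z, w) \<in> r\<^sup>*"
  proof (induct arbitrary: x rule: rtrancl_induct)
    case (step z1 z2)
    then obtain w where "(x, w) \<in> s\<^sup>*" "(z1, w) \<in> r\<^sup>*" by blast
    moreover obtain u where "(w, u) \<in> s" "(z2, u) \<in> r\<^sup>*"
      using commute_strip [OF assms] \<open>(z1, w) \<in> r\<^sup>*\<close> \<open>(z1, z2) \<in> s\<close> by blast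
    ultimately show ?case by (blast intro: rtrancl_into_rtrancl)
  qed blast
  then show "(x, z) \<in> s\<^sup>* O (r\<^sup>*)\<inverse>" by blast
qed

inductive_set par :: "(trm \<times> trm) set" where
  var: "(Var i, Var i) \<in> par"
| lam: "(a, b) \<in> par \<Longrightarrow> (Lam a, Lam b) \<in> par"
| app: "(a, b) \<in> par \<Longrightarrow> (c, d) \<in> par \<Longrightarrow> (App a c, App b d) \<in> par"
| der: "(a, b) \<in> par \<Longrightarrow> (Der a, Der b) \<in> par"
| bang: "(a, b) \<in> par \<Longrightarrow> (Bang a, Bang b) \<in> par"
| beta: "(t, t') \<in> par \<Longrightarrow> (s, s') \<in> par \<Longrightarrow> (App (Lam t) (Bang s), subst t' 0 s') \<in> par"

lemma par_refl: "(t, t) \<in> par"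
  by (induct t) (auto intro: par.intros)

lemma par_lift: "(a, b) \<in> par \<Longrightarrow> (lift k a, lift k b) \<in> par"
  by (induct arbitrary: k rule: par.induct) (auto intro: par.intros)

lemma par_subst: "(a, b) \<in> par \<Longrightarrow> (s, s') \<in> par \<Longrightarrow> (subst a k s, subst b k s') \<in> par"
proof (induct arbitrary: k s s' rule: par.induct)
  case (lam a b)
  then show ?case by (simp add: par.lam par_lift)
next
  case (beta t t' u u')
  then have "(App (Lam (subst t (Suc k) (lift 0 s))) (Bang (subst u k s)),
      subst (subst t' (Suc k) (lift 0 s')) 0 (subst u' k s')) \<in> par"
    by (simp add: par.beta par_lift)
  then show ?case by (simp add: subst_subst_0)
qed (auto intro: par.intros par_refl)

inductive_cases par_LamE: "(Lam a, z) \<in> par"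
inductive_cases par_BangE: "(Bang a, z) \<in> par"

fun dev :: "trm \<Rightarrow> trm" where
  "dev (Var i) = Var i"
| "dev (Lam t) = Lam (dev t)"
| "dev (App (Lam t) (Bang s)) = subst (dev t) 0 (dev s)"
| "dev (App t u) = App (dev t) (dev u)"
| "dev (Der t) = Der (dev t)"
| "dev (Bang t) = Bang (dev t)"

lemma par_dev: "(a, b) \<in> par \<Longrightarrow> (b, dev a) \<in> par"
proof (induct rule: par.induct)
  case (app a b c d)
  show ?case
  proof (cases "\<exists>t s. a = Lam t \<and> c = Bang s")
    case True
    then obtain t s where a: "a = Lam t" and c: "c = Bang s" by blast
    from app(1) [unfolded a] obtain t' where b: "b = Lam t'" "(t, t') \<in> par"
      by (blast elim: par_LamE)
    from app(3) [unfolded c] obtain s' where d: "d = Bang s'" "(s, s') \<in> par"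
      by (blast elim: par_BangE)
    have "(t', dev t) \<in> par" "(s', dev s) \<in> par"
      using app(2,4) a b c d by (auto elim: par_LamE par_BangE)
    then show ?thesis using a b c d by (simp add: par.beta)
  next
    case False
    then have "dev (App a c) = App (dev a) (dev c)"
      by (cases a; cases c) auto
    then show ?thesis using app by (simp add: par.app)
  qed
qed (auto intro: par.intros par_subst)

lemma par_diamond: "par\<inverse> O par \<subseteq> par O par\<inverse>"
  using par_dev by blast

lemma v_subset_par: "cclosure root_v \<subseteq> par"
proof (intro subrelI)
  fix a b assume "(a, b) \<in> cclosure root_v"
  then show "(a, b) \<in> par"
    by (induct rule: cclosure.induct) (auto intro: par.intros par_refl)
qed

lemma par_subset_v_rtrancl: "par \<subseteq> (cclosure root_v)\<^sup>*"
proof (intro subrelI)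
  fix a b assume "(a, b) \<in> par"
  then show "(a, b) \<in> (cclosure root_v)\<^sup>*"
  proof (induct rule: par.induct)
    case (beta t t' s s')
    then have "(App (Lam t) (Bang s), App (Lam t') (Bang s')) \<in> (cclosure root_v)\<^sup>*"
      by (auto intro: cclosure_rtrancl_App cclosure_rtrancl_Lam cclosure_rtrancl_Bang)
    moreover have "(App (Lam t') (Bang s'), subst t' 0 s') \<in> cclosure root_v"
      by (auto intro: cclosure.root)
    ultimately show ?case by (rule rtrancl_into_rtrancl)
  qed (auto intro: cclosure_rtrancl_App cclosure_rtrancl_Lam cclosure_rtrancl_Der
      cclosure_rtrancl_Bang)
qed

lemma par_rtrancl_eq: "par\<^sup>* = (cclosure root_v)\<^sup>*"
  using rtrancl_subset [OF v_subset_par par_subset_v_rtrancl] by simp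

lemma v_confluent:
  "((cclosure root_v)\<^sup>*)\<inverse> O (cclosure root_v)\<^sup>* \<subseteq> (cclosure root_v)\<^sup>* O ((cclosure root_v)\<^sup>*)\<inverse>"
proof -
  have "par\<inverse> O par \<subseteq> par O (par\<^sup>*)\<inverse>"
    using par_diamond by blast
  from commute_rtrancl [OF this] show ?thesis
    by (simp add: par_rtrancl_eq)
qed

theorem mainTheorem6:
  shows "(step_wv\<inverse> O step_wv \<subseteq> (step_wv O step_wv\<inverse>) \<union> Id)
       \<and> (step_wd\<inverse> O step_wd \<subseteq> (step_wd O step_wd\<inverse>) \<union> Id)
       \<and> (step_d\<inverse> O step_d \<subseteq> (step_d O step_d\<inverse>) \<union> Id)
       \<and> (step_wd\<inverse> O step_wv \<subseteq> step_wv O step_wd\<inverse>)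
       \<and> (step_d\<inverse> O step_v \<subseteq> step_v O (step_d\<^sup>*)\<inverse>)
       \<and> ((step_d\<^sup>*)\<inverse> O step_v\<^sup>* \<subseteq> step_v\<^sup>* O (step_d\<^sup>*)\<inverse>)
       \<and> ((step_v\<^sup>*)\<inverse> O step_v\<^sup>* \<subseteq> step_v\<^sup>* O (step_v\<^sup>*)\<inverse>)"
proof -
  have d_v_commute:
    "(cclosure root_d)\<inverse> O cclosure root_v \<subseteq> cclosure root_v O ((cclosure root_d)\<^sup>*)\<inverse>"
    using d_v_peak by blast
  show ?thesis
    unfolding step_wv_def step_wd_def step_d_def step_v_def
      ctx_closure_eq_cclosure wctx_closure_eq_wclosure
    using wv_peak wd_peak d_peak wd_wv_peak d_v_commute commute_rtrancl [OF d_v_commute]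
      v_confluent
    by (intro conjI) blast+
qed

end
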